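(* Let $p$ be a prime, $m,t\ge 1$, $B=\mathrm{GF}(p^m)$ and $F=\mathrm{GF}(p^{mt})$, and assume that $t$ is divisible by $p$ (the characteristic of $F$). Let $n=|F|=|B|^t$, $k=n(1-1/|B|)$, and let $\mathcal{C}=\mathrm{RS}(F,k)=\{(f(\alpha))_{\alpha\in F} : f\in F[x],\ \deg f\le k-1\}$, where the symbol $f(\alpha)$ is stored at the node indexed by $\alpha$. Let $K=\ker(\mathrm{Tr}_{F/B})=\{\kappa\in F:\mathrm{Tr}_{F/B}(\kappa)=0\}$. Suppose $f(\alpha^* )$, $f(\overline{\alpha})$, $f(\alpha')$ are three erased symbols, with $\alpha^*,\overline{\alpha},\alpha'$ distinct, such that $$\left\{\frac{\overline{\alpha}-\alpha^*}{\overline{\alpha}-\alpha'},\ \frac{\alpha'-\overline{\alpha}}{\alpha'-\alpha^*},\ \frac{\alpha^*-\alpha'}{\alpha^*-\overline{\alpha}}\right\}\cap K\neq\varnothing.$$ Then there exists a centralized repair scheme that recovers the three erased symbols by downloading three sub-symbols (elements of $B$) from each of the $n-3$ surviving nodes, each computed from that node's stored symbol; i.e., the repair bandwidth is $3(n-3)$ sub-symbols.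
   Context: Elements of $F$ are called symbols and elements of $B$ sub-symbols. The trace is $\mathrm{Tr}_{F/B}(x)=\sum_{i=0}^{t-1}x^{|B|^i}$. In centralized repair, a single repair center downloads data from the surviving nodes and computes all erased symbols; the repair bandwidth is the total number of sub-symbols downloaded. *)

theory Defs
  imports "HOL-Computational_Algebra.Polynomial"
begin

text \<open>The field F is modelled by a finite field type 'a with CARD('a) = p^(m*t).
  The subfield B = GF(p^m) of F is the unique subfield of order p^m, namely the
  set of fixed points of x \<mapsto> x^(p^m).\<close>

definition subfield_B :: "nat \<Rightarrow> nat \<Rightarrow> 'a::field set" where
  "subfield_B p m = {x. x ^ (p ^ m) = x}"

definition trace_FB :: "nat \<Rightarrow> nat \<Rightarrow> 'a::field \<Rightarrow> 'a" where
  "trace_FB q t x = (\<Sum>i<t. x ^ (q ^ i))"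

definition RS_code :: "nat \<Rightarrow> ('a::{field,finite} \<Rightarrow> 'a) set" where
  "RS_code k = {c. \<exists>f :: 'a poly. degree f \<le> k - 1 \<and> c = poly f}"

text \<open>Centralized repair scheme for the erased node set E in which the repair center
  downloads l sub-symbols (elements of Bs) from every surviving node alpha \<notin> E, the j-th
  being g alpha j (c alpha), computed from that node's stored symbol only; a recovery map R
  computes all erased symbols from the downloaded data.\<close>
definition has_centralized_repair ::
  "('a::zero \<Rightarrow> 'a) set \<Rightarrow> 'a set \<Rightarrow> 'a set \<Rightarrow> nat \<Rightarrow> bool" where
  "has_centralized_repair C Bs E l \<longleftrightarrow>
     (\<exists>g :: 'a \<Rightarrow> nat \<Rightarrow> 'a \<Rightarrow> 'a.
        (\<forall>\<alpha> j x. \<alpha> \<notin> E \<longrightarrow> j < l \<longrightarrow> g \<alpha> j x \<in> Bs) \<and>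
        (\<exists>R :: ('a \<Rightarrow> nat \<Rightarrow> 'a) \<Rightarrow> 'a \<Rightarrow> 'a.
           \<forall>c\<in>C. \<forall>e\<in>E.
             R (\<lambda>\<alpha> j. if \<alpha> \<notin> E \<and> j < l then g \<alpha> j (c \<alpha>) else 0) e = c e))"

definition repair_bandwidth :: "'a::finite set \<Rightarrow> nat \<Rightarrow> nat" where
  "repair_bandwidth E l = l * (card (UNIV :: 'a set) - card E)"

end

theory Submission
  imports Defs "HOL-Number_Theory.Residues"
begin

hide_const (open) up_ring.coeff up_ring.monom module.smult

text \<open>
  Let \<open>q = |B|\<close>, \<open>n = q^t\<close> and \<open>k = n - q^(t-1)\<close>. The dual of the full-length code
  \<open>RS(F,k)\<close> contains every evaluation vector of a polynomial of degree below \<open>q^(t-1)\<close>, in particular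
  \<open>r\<^sub>u(x) = Tr(u (x - e)) / (x - e)\<close>, which takes the value \<open>u\<close> at \<open>e\<close>. Taking traces of
  \<open>\<Sum>\<^sub>\<alpha> r\<^sub>u(\<alpha>) f(\<alpha>) = 0\<close> for all \<open>u\<close> and using nondegeneracy of the trace form gives
  \<open>f(e) = -\<Sum>\<^sub>\<alpha>\<^sub>\<noteq>\<^sub>e Tr(f(\<alpha>)/(\<alpha>-e)) (\<alpha>-e)\<close>. So if a codeword \<open>f\<close> has all downloads
  \<open>Tr(f(\<alpha>)/(\<alpha>-e))\<close> zero (\<open>\<alpha>\<close> surviving, \<open>e\<close> erased), each erased value is a combination of
  the sub-symbols \<open>D(x,y) = Tr(f(x)/(x-y))\<close> between erased points. As \<open>p | t\<close>, \<open>Tr 1 = 0\<close>, so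
  dividing the expression for \<open>f(x)\<close> by \<open>x - y\<close> and taking traces gives
  \<open>D(x,y) = D(z,x) Tr((x-z)/(x-y))\<close>, \<open>z\<close> the third erased point. Around either 3-cycle of
  erased points these coefficients are, up to \<open>\<kappa> \<mapsto> 1 - \<kappa>\<close>, the traces of the three ratios of
  the hypothesis; one vanishes, hence all \<open>D(x,y)\<close> and all erased values of \<open>f\<close> vanish. Applied to the
  difference of two codewords with the same downloads, this shows the downloads determine the
  erased symbols.
\<close>

lemma prime_CHAR_finite_field: "prime CHAR('a::{field,finite})"
  by (rule prime_CHAR_semidom) (simp add: finite_imp_CHAR_pos)

lemma of_nat_card_eq_0: "of_nat (card (UNIV :: 'a set)) = (0 :: 'a::{field,finite})"
  by (simp add: CHAR_dvd_CARD of_nat_eq_0_iff_char_dvd)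

lemma CHAR_eq_prime_of_card:
  assumes "prime p" and "card (UNIV :: 'a::{field,finite} set) = p ^ n"
  shows "CHAR('a) = p"
proof -
  have "CHAR('a) dvd p ^ n" using CHAR_dvd_CARD[where 'a = 'a] assms(2) by simp
  then have "CHAR('a) dvd p" by (rule prime_dvd_power[OF prime_CHAR_finite_field])
  then show ?thesis by (rule primes_dvd_imp_eq[OF prime_CHAR_finite_field assms(1)])
qed

lemma card_UNIV_field_ge_2: "card (UNIV :: 'a::{field,finite} set) \<ge> 2"
proof -
  have "card {0, 1 :: 'a} \<le> card (UNIV :: 'a set)"
    by (rule card_mono) auto
  then show ?thesis by simp
qed

lemma power_card_eq_self:
  fixes x :: "'a::{field,finite}"
  shows "x ^ card (UNIV :: 'a set) = x"
proof (cases "x = 0")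
  case True
  then show ?thesis using card_UNIV_field_ge_2[where 'a='a] by simp
next
  case False
  define n where "n = card (UNIV :: 'a set)"
  define P where "P = (\<Prod>y\<in>UNIV - {0}. y :: 'a)"
  have "P \<noteq> 0" by (simp add: P_def)
  have "(\<Prod>y\<in>UNIV - {0}. x * y) = P"
    unfolding P_def
    by (rule prod.reindex_bij_witness[of _ "\<lambda>y. y / x" "\<lambda>y. x * y"]) (use False in auto)
  moreover have "(\<Prod>y\<in>UNIV - {0}. x * y) = x ^ (n - 1) * P"
    by (simp add: P_def n_def prod.distrib card_Diff_singleton)
  ultimately have "x ^ (n - 1) = 1" using \<open>P \<noteq> 0\<close> by simp
  moreover have "n = Suc (n - 1)" using card_UNIV_field_ge_2[where 'a='a] by (simp add: n_def)
  then have "x ^ n = x * x ^ (n - 1)" by (metis power_Suc)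
  ultimately show ?thesis by (simp add: n_def)
qed

lemma exists_power_ne_one:
  assumes "0 < j" "j \<le> card (UNIV :: 'a::{field,finite} set) - 2"
  shows "\<exists>g :: 'a. g \<noteq> 0 \<and> g ^ j \<noteq> 1"
proof (rule ccontr)
  assume "\<not> ?thesis"
  then have roots: "poly (monom 1 j) g = poly 1 g" if "g \<in> UNIV - {0 :: 'a}" for g
    using that by (auto simp: poly_monom)
  have "card (UNIV - {0 :: 'a}) = card (UNIV :: 'a set) - 1"
    by (simp add: card_Diff_singleton)
  moreover note assms card_UNIV_field_ge_2[where 'a='a]
  ultimately have "monom (1 :: 'a) j = 1"
    by (intro poly_eqI_degree[of "UNIV - {0}", OF roots]) (simp_all add: degree_monom_eq)
  then have "coeff (monom (1 :: 'a) j) j = coeff 1 j" by simp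
  then show False using assms(1) by simp
qed

text \<open>Multiplying by a \<open>g\<close> with \<open>g ^ j \<noteq> 1\<close> permutes the field but scales the sum by \<open>g ^ j\<close>.\<close>

lemma sum_UNIV_power_eq_0:
  assumes "j \<le> card (UNIV :: 'a::{field,finite} set) - 2"
  shows "(\<Sum>a\<in>UNIV. a ^ j :: 'a) = 0"
proof (cases "j = 0")
  case True
  then show ?thesis by (simp add: of_nat_card_eq_0)
next
  case False
  then obtain g :: 'a where g: "g \<noteq> 0" "g ^ j \<noteq> 1"
    using exists_power_ne_one assms by blast
  have "(\<Sum>a\<in>UNIV. (g * a) ^ j) = (\<Sum>a\<in>UNIV. a ^ j :: 'a)"
    by (rule sum.reindex_bij_witness[of _ "\<lambda>y. y / g" "\<lambda>y. g * y"]) (use g in auto)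
  then have "g ^ j * (\<Sum>a\<in>UNIV. a ^ j) = (\<Sum>a\<in>UNIV. a ^ j)"
    by (simp add: power_mult_distrib sum_distrib_left)
  then have "(g ^ j - 1) * (\<Sum>a\<in>UNIV. a ^ j) = 0"
    by (simp add: algebra_simps)
  then show ?thesis using g by simp
qed

lemma sum_UNIV_poly_eq_0:
  assumes "degree P \<le> card (UNIV :: 'a::{field,finite} set) - 2"
  shows "(\<Sum>a\<in>UNIV. poly P a :: 'a) = 0"
proof -
  have "(\<Sum>a\<in>UNIV. poly P a) = (\<Sum>a\<in>UNIV. \<Sum>i\<le>degree P. coeff P i * a ^ i)"
    by (simp add: poly_altdef)
  also have "\<dots> = (\<Sum>i\<le>degree P. coeff P i * (\<Sum>a\<in>UNIV. a ^ i))"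
    by (subst sum.swap) (simp add: sum_distrib_left)
  also have "\<dots> = 0"
    using assms by (intro sum.neutral) (auto simp: sum_UNIV_power_eq_0)
  finally show ?thesis .
qed

lemma has_centralized_repairI:
  assumes download_in: "\<And>\<alpha> j x. \<alpha> \<notin> E \<Longrightarrow> j < l \<Longrightarrow> g \<alpha> j x \<in> Bs"
    and download_determines: "\<And>c c' e. c \<in> C \<Longrightarrow> c' \<in> C \<Longrightarrow> e \<in> E \<Longrightarrow>
      (\<And>\<alpha> j. \<alpha> \<notin> E \<Longrightarrow> j < l \<Longrightarrow> g \<alpha> j (c \<alpha>) = g \<alpha> j (c' \<alpha>)) \<Longrightarrow> c e = c' e"
  shows "has_centralized_repair C Bs E l"
proof -
  define data where "data c = (\<lambda>\<alpha> j. if \<alpha> \<notin> E \<and> j < l then g \<alpha> j (c \<alpha>) else 0)"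
    for c :: "'a \<Rightarrow> 'a"
  define R where "R d = (SOME c. c \<in> C \<and> data c = d)" for d
  have "R (data c) e = c e" if "c \<in> C" "e \<in> E" for c e
  proof -
    have "R (data c) \<in> C \<and> data (R (data c)) = data c"
      unfolding R_def by (rule someI[of _ c]) (use that in simp)
    then have R_in: "R (data c) \<in> C" and same_data: "data (R (data c)) \<alpha> j = data c \<alpha> j" for \<alpha> j
      by simp_all
    show ?thesis
    proof (rule download_determines[OF R_in that])
      fix \<alpha> j assume "\<alpha> \<notin> E" "j < l"
      then show "g \<alpha> j (R (data c) \<alpha>) = g \<alpha> j (c \<alpha>)"
        using same_data[of \<alpha> j] by (simp add: data_def)
    qed
  qed
  then show ?thesis
    unfolding has_centralized_repair_def
    by (intro exI[of _ g] exI[of _ R] conjI allI impI ballI download_in)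
      (simp_all add: data_def)
qed

context
  fixes q m t :: nat
  assumes q_eq: "q = CHAR('a::{field,finite}) ^ m"
    and m_pos: "m \<ge> 1" and t_pos: "t \<ge> 1"
    and card_eq: "card (UNIV :: 'a set) = q ^ t"
begin

lemma q_ge_2: "q \<ge> 2"
proof -
  have "CHAR('a) \<ge> 2" by (rule prime_ge_2_nat[OF prime_CHAR_finite_field])
  then have "CHAR('a) ^ 1 \<le> CHAR('a) ^ m" using m_pos by (intro power_increasing) auto
  then show ?thesis using \<open>CHAR('a) \<ge> 2\<close> q_eq by simp
qed

lemma card_eq_q_mult: "card (UNIV :: 'a set) = q * q ^ (t - 1)"
  using card_eq t_pos by (simp flip: power_Suc)

lemma card_div_q: "card (UNIV :: 'a set) div q = q ^ (t - 1)"
  using q_ge_2 by (simp add: card_eq_q_mult)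

lemma frobenius_add: "(x + y :: 'a) ^ (q ^ i) = x ^ (q ^ i) + y ^ (q ^ i)"
  by (rule freshmans_dream'[OF prime_CHAR_finite_field, where n = "m * i"])
    (simp add: q_eq power_mult)

lemma frobenius_uminus: "(- x :: 'a) ^ (q ^ i) = - (x ^ (q ^ i))"
  using frobenius_add[of x "- x" i] q_ge_2 by (simp add: power_0_left eq_neg_iff_add_eq_0 add.commute)

lemma frobenius_fixed_power: "(b :: 'a) ^ q = b \<Longrightarrow> b ^ (q ^ i) = b"
  by (induction i) (simp_all add: power_mult mult.commute)

lemma trace_add: "trace_FB q t (x + y :: 'a) = trace_FB q t x + trace_FB q t y"
  unfolding trace_FB_def by (simp add: frobenius_add sum.distrib)

lemma trace_uminus: "trace_FB q t (- x :: 'a) = - trace_FB q t x"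
  unfolding trace_FB_def by (simp add: frobenius_uminus sum_negf)

lemma trace_diff: "trace_FB q t (x - y :: 'a) = trace_FB q t x - trace_FB q t y"
  using trace_add[of x "- y"] trace_uminus[of y] by simp

lemma trace_zero: "trace_FB q t (0 :: 'a) = 0"
  unfolding trace_FB_def using q_ge_2 by (simp add: power_0_left)

lemma trace_sum: "trace_FB q t (\<Sum>x\<in>A. g x :: 'a) = (\<Sum>x\<in>A. trace_FB q t (g x))"
  by (induction A rule: infinite_finite_induct) (simp_all add: trace_zero trace_add)

lemma trace_one: "trace_FB q t (1 :: 'a) = of_nat t"
  unfolding trace_FB_def by simp

lemma trace_mult_fixed: "(b :: 'a) ^ q = b \<Longrightarrow> trace_FB q t (b * x) = b * trace_FB q t x"
  unfolding trace_FB_def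
  by (simp add: power_mult_distrib frobenius_fixed_power sum_distrib_left)

text \<open>The Frobenius power permutes the summands \<open>x^(q^i)\<close> cyclically, as \<open>x^(q^t) = x\<close>.\<close>

lemma trace_power_q: "trace_FB q t (x :: 'a) ^ q = trace_FB q t x"
proof -
  have "trace_FB q t x ^ q = (\<Sum>i<t. (x ^ (q ^ i)) ^ q)"
    unfolding trace_FB_def by (rule freshmans_dream_sum'[OF prime_CHAR_finite_field q_eq])
  also have "\<dots> = (\<Sum>i<t. x ^ (q ^ Suc i))"
    by (simp add: power_mult[symmetric] mult.commute)
  also have "\<dots> = (\<Sum>i<Suc t. x ^ (q ^ i)) - x"
    by (simp only: sum.lessThan_Suc_shift) simp
  also have "\<dots> = trace_FB q t x"
    using power_card_eq_self[of x] by (simp add: card_eq trace_FB_def)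
  finally show ?thesis .
qed

text \<open>The trace is a nonzero polynomial function of degree \<open>q^(t-1) < |F|\<close>.\<close>

lemma trace_nonzero: "\<exists>x :: 'a. trace_FB q t x \<noteq> 0"
proof (rule ccontr)
  assume zero: "\<not> ?thesis"
  define T :: "'a poly" where "T = (\<Sum>i<t. monom 1 (q ^ i))"
  have poly_T: "poly T x = trace_FB q t x" for x
    unfolding T_def trace_FB_def by (simp add: poly_sum poly_monom)
  have "degree T \<le> q ^ (t - 1)"
    unfolding T_def
  proof (intro degree_sum_le)
    fix i assume "i \<in> {..<t}"
    then have "q ^ i \<le> q ^ (t - 1)" using q_ge_2 by (intro power_increasing) auto
    then show "degree (monom (1 :: 'a) (q ^ i)) \<le> q ^ (t - 1)"
      using degree_monom_le[of "1 :: 'a" "q ^ i"] by simp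
  qed simp
  also have "q ^ (t - 1) < card (UNIV :: 'a set)"
    using q_ge_2 by (simp add: card_eq_q_mult n_less_m_mult_n)
  finally have "T = 0"
    using zero by (intro poly_eqI_degree[of UNIV]) (auto simp: poly_T)
  moreover have "coeff T (q ^ (t - 1)) = (\<Sum>i<t. if i = t - 1 then 1 else 0)"
    unfolding T_def coeff_sum coeff_monom
    using q_ge_2 by (intro sum.cong) (auto simp: power_inject_exp)
  ultimately show False using t_pos by simp
qed

lemma trace_nondegenerate:
  assumes "\<And>u. trace_FB q t (u * z :: 'a) = 0"
  shows "z = 0"
proof (rule ccontr)
  assume "z \<noteq> 0"
  obtain x :: 'a where "trace_FB q t x \<noteq> 0" using trace_nonzero by blast
  moreover have "trace_FB q t (x / z * z) = 0" by (rule assms)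
  ultimately show False using \<open>z \<noteq> 0\<close> by simp
qed

text \<open>The polynomial \<open>Tr(u (x - e)) / (x - e) = \<Sum>\<^sub>i u^(q^i) (x - e)^(q^i - 1)\<close>.\<close>

definition trace_quotient_poly :: "'a \<Rightarrow> 'a \<Rightarrow> 'a poly" where
  "trace_quotient_poly u e = (\<Sum>i<t. smult (u ^ (q ^ i)) ([:- e, 1:] ^ (q ^ i - 1)))"

lemma degree_trace_quotient_poly: "degree (trace_quotient_poly u e) \<le> q ^ (t - 1) - 1"
  unfolding trace_quotient_poly_def
proof (intro degree_sum_le)
  fix i assume "i \<in> {..<t}"
  then have "q ^ i \<le> q ^ (t - 1)" using q_ge_2 by (intro power_increasing) auto
  then show "degree (smult (u ^ (q ^ i)) ([:- e, 1:] ^ (q ^ i - 1))) \<le> q ^ (t - 1) - 1"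
    using degree_smult_le[of "u ^ (q ^ i)" "[:- e, 1:] ^ (q ^ i - 1)"]
      degree_linear_power[of "- e" "q ^ i - 1"] by simp
qed simp

lemma poly_trace_quotient_poly_at: "poly (trace_quotient_poly u e) e = u"
proof -
  have "q ^ i - 1 = 0 \<longleftrightarrow> i = 0" for i
    using q_ge_2 one_less_power[of q i] by (cases "i = 0") auto
  then have "poly (trace_quotient_poly u e) e = (\<Sum>i<t. if i = 0 then u else 0)"
    unfolding trace_quotient_poly_def poly_sum by (intro sum.cong) (auto simp: power_0_left)
  then show ?thesis using t_pos by simp
qed

lemma poly_trace_quotient_poly_mult:
  "poly (trace_quotient_poly u e) a * (a - e) = trace_FB q t (u * (a - e))"
  unfolding trace_quotient_poly_def poly_sum trace_FB_def sum_distrib_right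
proof (intro sum.cong refl)
  fix i
  have "(a - e) ^ (q ^ i - 1) * (a - e) = (a - e) ^ (q ^ i)"
    using q_ge_2 by (simp flip: power_Suc2)
  then show "poly (smult (u ^ (q ^ i)) ([:- e, 1:] ^ (q ^ i - 1))) a * (a - e) = (u * (a - e)) ^ (q ^ i)"
    by (simp add: power_mult_distrib mult.assoc)
qed

lemma sum_trace_quotient_poly_mult_eq_0:
  assumes "degree f \<le> card (UNIV :: 'a set) - card (UNIV :: 'a set) div q - 1"
  shows "(\<Sum>a\<in>UNIV. poly (trace_quotient_poly u e) a * poly f a) = 0"
proof -
  define Q where "Q = q ^ (t - 1)"
  have "Q \<ge> 1" using q_ge_2 by (simp add: Q_def)
  moreover have "card (UNIV :: 'a set) \<ge> 2 * Q"
    using q_ge_2 by (simp add: card_eq_q_mult Q_def)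
  moreover have "degree (trace_quotient_poly u e * f) \<le> (Q - 1) + (card (UNIV :: 'a set) - Q - 1)"
    using degree_mult_le[of "trace_quotient_poly u e" f] degree_trace_quotient_poly[of u e]
      assms card_div_q by (simp add: Q_def)
  ultimately have "degree (trace_quotient_poly u e * f) \<le> card (UNIV :: 'a set) - 2"
    by linarith
  then show ?thesis using sum_UNIV_poly_eq_0 by fastforce
qed

lemma trace_repair_formula:
  fixes f :: "'a poly"
  assumes deg: "degree f \<le> card (UNIV :: 'a set) - card (UNIV :: 'a set) div q - 1"
  shows "poly f e = - (\<Sum>a\<in>UNIV - {e}. trace_FB q t (poly f a / (a - e)) * (a - e))"
proof -
  define D where "D a = trace_FB q t (poly f a / (a - e))" for a
  have D_fixed: "D a ^ q = D a" for a unfolding D_def by (rule trace_power_q)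
  define z where "z = poly f e + (\<Sum>a\<in>UNIV - {e}. D a * (a - e))"
  have "trace_FB q t (u * z) = 0" for u :: 'a
  proof -
    define r where "r = poly (trace_quotient_poly u e)"
    have summand: "trace_FB q t (u * (D a * (a - e))) = trace_FB q t (r a * poly f a)"
      if "a \<noteq> e" for a
    proof -
      have "r a * poly f a = (r a * (a - e)) * (poly f a / (a - e))"
        using that by simp
      also have "\<dots> = trace_FB q t (u * (a - e)) * (poly f a / (a - e))"
        by (simp add: r_def poly_trace_quotient_poly_mult)
      finally have expand: "r a * poly f a = trace_FB q t (u * (a - e)) * (poly f a / (a - e))" .
      have "u * (D a * (a - e)) = D a * (u * (a - e))" by (rule mult.left_commute)
      then have "trace_FB q t (u * (D a * (a - e))) = D a * trace_FB q t (u * (a - e))"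
        by (simp only: trace_mult_fixed[OF D_fixed])
      moreover have "trace_FB q t (r a * poly f a) = trace_FB q t (u * (a - e)) * D a"
        unfolding expand D_def by (rule trace_mult_fixed[OF trace_power_q])
      ultimately show ?thesis by (simp only: mult.commute)
    qed
    have "trace_FB q t (u * z)
        = trace_FB q t (r e * poly f e) + (\<Sum>a\<in>UNIV - {e}. trace_FB q t (u * (D a * (a - e))))"
      by (simp add: z_def r_def poly_trace_quotient_poly_at distrib_left sum_distrib_left
          trace_add trace_sum)
    also have "\<dots> = (\<Sum>a\<in>UNIV. trace_FB q t (r a * poly f a))"
      by (simp add: summand sum.remove[of UNIV e])
    also have "\<dots> = trace_FB q t (\<Sum>a\<in>UNIV. r a * poly f a)"
      by (simp add: trace_sum)
    also have "\<dots> = 0"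
      using sum_trace_quotient_poly_mult_eq_0[OF deg] by (simp add: r_def trace_zero)
    finally show ?thesis .
  qed
  then have "z = 0" by (rule trace_nondegenerate)
  then show ?thesis by (simp add: z_def D_def eq_neg_iff_add_eq_0)
qed

lemma trace_repair_formula_erasures:
  fixes f :: "'a poly"
  assumes deg: "degree f \<le> card (UNIV :: 'a set) - card (UNIV :: 'a set) div q - 1"
    and "e \<in> E"
    and vanish: "\<And>a. a \<notin> E \<Longrightarrow> trace_FB q t (poly f a / (a - e)) = 0"
  shows "poly f e = - (\<Sum>a\<in>E - {e}. trace_FB q t (poly f a / (a - e)) * (a - e))"
proof -
  have "poly f e = - (\<Sum>a\<in>UNIV - {e}. trace_FB q t (poly f a / (a - e)) * (a - e))"
    by (rule trace_repair_formula[OF deg])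
  also have "(\<Sum>a\<in>UNIV - {e}. trace_FB q t (poly f a / (a - e)) * (a - e))
      = (\<Sum>a\<in>E - {e}. trace_FB q t (poly f a / (a - e)) * (a - e))"
    using vanish by (intro sum.mono_neutral_right) auto
  finally show ?thesis .
qed

lemma three_erasure_relation:
  fixes f :: "'a poly"
  assumes deg: "degree f \<le> card (UNIV :: 'a set) - card (UNIV :: 'a set) div q - 1"
    and distinct: "a \<noteq> b" "b \<noteq> c" "a \<noteq> c"
    and vanish: "\<And>x e. x \<notin> {a, b, c} \<Longrightarrow> e \<in> {a, b, c} \<Longrightarrow>
      trace_FB q t (poly f x / (x - e)) = 0"
  shows "poly f a = - (trace_FB q t (poly f b / (b - a)) * (b - a)
                     + trace_FB q t (poly f c / (c - a)) * (c - a))"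
proof -
  have "poly f a = - (\<Sum>x\<in>{a, b, c} - {a}. trace_FB q t (poly f x / (x - a)) * (x - a))"
    by (rule trace_repair_formula_erasures[OF deg]) (simp_all add: vanish)
  also have "{a, b, c} - {a} = {b, c}" using distinct by auto
  finally show ?thesis using distinct by simp
qed

lemma three_erasure_relation_rotated:
  fixes f :: "'a poly"
  assumes deg: "degree f \<le> card (UNIV :: 'a set) - card (UNIV :: 'a set) div q - 1"
    and distinct: "a \<noteq> b" "b \<noteq> c" "a \<noteq> c"
    and vanish: "\<And>x e. x \<notin> {a, b, c} \<Longrightarrow> e \<in> {a, b, c} \<Longrightarrow>
      trace_FB q t (poly f x / (x - e)) = 0"
  shows "poly f b = - (trace_FB q t (poly f c / (c - b)) * (c - b)
                     + trace_FB q t (poly f a / (a - b)) * (a - b))"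
    and "poly f c = - (trace_FB q t (poly f a / (a - c)) * (a - c)
                     + trace_FB q t (poly f b / (b - c)) * (b - c))"
proof -
  have rotate: "{b, c, a} = {a, b, c}" "{c, a, b} = {a, b, c}" by auto
  have vanish_bca: "\<And>x e. x \<notin> {b, c, a} \<Longrightarrow> e \<in> {b, c, a} \<Longrightarrow>
      trace_FB q t (poly f x / (x - e)) = 0"
    using vanish unfolding rotate by assumption
  have vanish_cab: "\<And>x e. x \<notin> {c, a, b} \<Longrightarrow> e \<in> {c, a, b} \<Longrightarrow>
      trace_FB q t (poly f x / (x - e)) = 0"
    using vanish unfolding rotate by assumption
  show "poly f b = - (trace_FB q t (poly f c / (c - b)) * (c - b)
                     + trace_FB q t (poly f a / (a - b)) * (a - b))"
    using distinct by (intro three_erasure_relation[OF deg _ _ _ vanish_bca]) auto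
  show "poly f c = - (trace_FB q t (poly f a / (a - c)) * (a - c)
                     + trace_FB q t (poly f b / (b - c)) * (b - c))"
    using distinct by (intro three_erasure_relation[OF deg _ _ _ vanish_cab]) auto
qed

context
  assumes t_eq_0: "of_nat t = (0 :: 'a)"
begin

lemma trace_fixed_eq_0: "(b :: 'a) ^ q = b \<Longrightarrow> trace_FB q t b = 0"
  using trace_mult_fixed[of b 1] by (simp add: trace_one t_eq_0)

lemma trace_one_minus: "trace_FB q t (1 - x :: 'a) = - trace_FB q t x"
  by (simp add: trace_diff trace_one t_eq_0)

text \<open>
  Dividing the relation for \<open>f(x)\<close> by \<open>x - y\<close> turns the coefficient of \<open>D(y,x)\<close> into
  \<open>D(y,x) \<in> B\<close>, whose trace vanishes because \<open>Tr 1 = 0\<close>.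
\<close>

lemma trace_div_of_erasure_relation:
  assumes "h = - (d\<^sub>1 * (y - x) + d\<^sub>2 * (z - x))"
    and "d\<^sub>1 ^ q = d\<^sub>1" and "d\<^sub>2 ^ q = d\<^sub>2" and "x \<noteq> (y :: 'a)"
  shows "trace_FB q t (h / (x - y)) = d\<^sub>2 * trace_FB q t ((x - z) / (x - y))"
proof -
  have "h / (x - y) = d\<^sub>1 + d\<^sub>2 * ((x - z) / (x - y))"
    using assms(1,4) by (simp add: field_simps)
  then show ?thesis
    by (simp only: trace_add trace_fixed_eq_0[OF assms(2)] trace_mult_fixed[OF assms(3)]) simp
qed

lemma three_erasure_cycle_vanish:
  fixes f :: "'a poly"
  assumes deg: "degree f \<le> card (UNIV :: 'a set) - card (UNIV :: 'a set) div q - 1"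
    and distinct: "a \<noteq> b" "b \<noteq> c" "a \<noteq> c"
    and vanish: "\<And>x e. x \<notin> {a, b, c} \<Longrightarrow> e \<in> {a, b, c} \<Longrightarrow>
      trace_FB q t (poly f x / (x - e)) = 0"
    and kernel: "trace_FB q t ((b - a) / (b - c)) = 0 \<or> trace_FB q t ((c - b) / (c - a)) = 0
      \<or> trace_FB q t ((a - c) / (a - b)) = 0"
  shows "trace_FB q t (poly f a / (a - b)) = 0 \<and> trace_FB q t (poly f b / (b - c)) = 0
    \<and> trace_FB q t (poly f c / (c - a)) = 0"
proof -
  define D where "D x y = trace_FB q t (poly f x / (x - y))" for x y
  have D_fixed: "D x y ^ q = D x y" for x y unfolding D_def by (rule trace_power_q)
  note relations = three_erasure_relation[OF deg distinct vanish]
    three_erasure_relation_rotated[OF deg distinct vanish]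
  have ab: "D a b = D c a * trace_FB q t ((a - c) / (a - b))"
    unfolding D_def[of a b] using relations(1) D_fixed distinct
    by (intro trace_div_of_erasure_relation) (simp_all add: D_def)
  have bc: "D b c = D a b * trace_FB q t ((b - a) / (b - c))"
    unfolding D_def[of b c] using relations(2) D_fixed distinct
    by (intro trace_div_of_erasure_relation) (simp_all add: D_def)
  have ca: "D c a = D b c * trace_FB q t ((c - b) / (c - a))"
    unfolding D_def[of c a] using relations(3) D_fixed distinct
    by (intro trace_div_of_erasure_relation) (simp_all add: D_def)
  from kernel ab bc ca have "D a b = 0 \<and> D b c = 0 \<and> D c a = 0" by auto
  then show ?thesis by (simp add: D_def)
qed

text \<open>
  The kernel condition is symmetric under reversing the orientation of the erased
  points, because reversing replaces each ratio \<open>\<kappa>\<close> by \<open>1 - \<kappa>\<close>.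
\<close>

lemma three_erasures_vanish:
  fixes f :: "'a poly"
  assumes deg: "degree f \<le> card (UNIV :: 'a set) - card (UNIV :: 'a set) div q - 1"
    and distinct: "a \<noteq> b" "b \<noteq> c" "a \<noteq> c"
    and vanish: "\<And>x e. x \<notin> {a, b, c} \<Longrightarrow> e \<in> {a, b, c} \<Longrightarrow>
      trace_FB q t (poly f x / (x - e)) = 0"
    and kernel: "trace_FB q t ((b - a) / (b - c)) = 0 \<or> trace_FB q t ((c - b) / (c - a)) = 0
      \<or> trace_FB q t ((a - c) / (a - b)) = 0"
  shows "poly f a = 0 \<and> poly f b = 0 \<and> poly f c = 0"
proof -
  have "(c - a) / (c - b) = 1 - (b - a) / (b - c)" "(b - c) / (b - a) = 1 - (a - c) / (a - b)"
    "(a - b) / (a - c) = 1 - (c - b) / (c - a)"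
    using distinct by (simp_all add: field_simps)
  then have kernel': "trace_FB q t ((c - a) / (c - b)) = 0 \<or> trace_FB q t ((b - c) / (b - a)) = 0
      \<or> trace_FB q t ((a - b) / (a - c)) = 0"
    using kernel by (auto simp: trace_one_minus)
  have "{a, c, b} = {a, b, c}" by auto
  then have vanish': "\<And>x e. x \<notin> {a, c, b} \<Longrightarrow> e \<in> {a, c, b} \<Longrightarrow>
      trace_FB q t (poly f x / (x - e)) = 0"
    using vanish by simp
  have "a \<noteq> c" "c \<noteq> b" "a \<noteq> b" using distinct by auto
  then have "trace_FB q t (poly f a / (a - c)) = 0" "trace_FB q t (poly f c / (c - b)) = 0"
    "trace_FB q t (poly f b / (b - a)) = 0"
    using three_erasure_cycle_vanish[OF deg _ _ _ vanish' kernel'] by auto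
  moreover have "trace_FB q t (poly f a / (a - b)) = 0" "trace_FB q t (poly f b / (b - c)) = 0"
    "trace_FB q t (poly f c / (c - a)) = 0"
    using three_erasure_cycle_vanish[OF deg distinct vanish kernel] by auto
  moreover note three_erasure_relation[OF deg distinct vanish]
    three_erasure_relation_rotated[OF deg distinct vanish]
  ultimately show ?thesis by simp
qed

lemma RS_trace_downloads_determine_three_erasures:
  fixes w w' :: "'a \<Rightarrow> 'a"
  assumes "w \<in> RS_code (card (UNIV :: 'a set) - card (UNIV :: 'a set) div q)"
    and "w' \<in> RS_code (card (UNIV :: 'a set) - card (UNIV :: 'a set) div q)"
    and distinct: "a \<noteq> b" "b \<noteq> c" "a \<noteq> c"
    and kernel: "trace_FB q t ((b - a) / (b - c)) = 0 \<or> trace_FB q t ((c - b) / (c - a)) = 0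
      \<or> trace_FB q t ((a - c) / (a - b)) = 0"
    and same: "\<And>x e. x \<notin> {a, b, c} \<Longrightarrow> e \<in> {a, b, c} \<Longrightarrow>
      trace_FB q t (w x / (x - e)) = trace_FB q t (w' x / (x - e))"
    and "e \<in> {a, b, c}"
  shows "w e = w' e"
proof -
  obtain f f' :: "'a poly"
    where deg: "degree f \<le> card (UNIV :: 'a set) - card (UNIV :: 'a set) div q - 1"
      "degree f' \<le> card (UNIV :: 'a set) - card (UNIV :: 'a set) div q - 1"
      and w: "w = poly f" "w' = poly f'"
    using assms(1,2) unfolding RS_code_def by auto
  have "trace_FB q t (poly (f - f') x / (x - e)) = 0" if "x \<notin> {a, b, c}" "e \<in> {a, b, c}" for x e
    using same[OF that] by (simp add: w diff_divide_distrib trace_diff)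
  then have "poly (f - f') a = 0 \<and> poly (f - f') b = 0 \<and> poly (f - f') c = 0"
    using distinct kernel degree_diff_le[OF deg] by (intro three_erasures_vanish) auto
  then show ?thesis using \<open>e \<in> {a, b, c}\<close> by (auto simp: w)
qed

lemma has_centralized_repair_RS_three_erasures:
  fixes a b c :: 'a
  assumes distinct: "a \<noteq> b" "b \<noteq> c" "a \<noteq> c"
    and kernel: "trace_FB q t ((b - a) / (b - c)) = 0 \<or> trace_FB q t ((c - b) / (c - a)) = 0
      \<or> trace_FB q t ((a - c) / (a - b)) = 0"
  shows "has_centralized_repair (RS_code (card (UNIV :: 'a set) - card (UNIV :: 'a set) div q))
    {x. x ^ q = x} {a, b, c} 3"
proof -
  define points where "points = [a, b, c]"
  have points: "set points = {a, b, c}" "length points = 3" by (simp_all add: points_def)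
  define download where "download \<alpha> j x = trace_FB q t (x / (\<alpha> - points ! j))" for \<alpha> j x
  show ?thesis
  proof (rule has_centralized_repairI[of _ _ download])
    show "download \<alpha> j x \<in> {x. x ^ q = x}" for \<alpha> j x
      by (simp add: download_def trace_power_q)
  next
    fix w w' e
    assume w: "w \<in> RS_code (card (UNIV :: 'a set) - card (UNIV :: 'a set) div q)"
      "w' \<in> RS_code (card (UNIV :: 'a set) - card (UNIV :: 'a set) div q)"
      and "e \<in> {a, b, c}"
      and same: "\<And>\<alpha> j. \<alpha> \<notin> {a, b, c} \<Longrightarrow> j < 3 \<Longrightarrow> download \<alpha> j (w \<alpha>) = download \<alpha> j (w' \<alpha>)"
    show "w e = w' e"
    proof (rule RS_trace_downloads_determine_three_erasures[OF w distinct kernel _ \<open>e \<in> _\<close>])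
      fix x e' assume "x \<notin> {a, b, c}" "e' \<in> {a, b, c}"
      moreover obtain j where "j < 3" "points ! j = e'"
        using \<open>e' \<in> _\<close> points by (metis in_set_conv_nth)
      ultimately show "trace_FB q t (w x / (x - e')) = trace_FB q t (w' x / (x - e'))"
        using same[of x j] by (simp add: download_def)
    qed
  qed
qed

end

end

theorem theorem4:
  fixes p m t :: nat
    and a_star a_bar a' :: "'a::{field,finite}"
  assumes "prime p" and "m \<ge> 1" and "t \<ge> 1"
    and "card (UNIV :: 'a set) = p ^ (m * t)"
    and "p dvd t"
    and "a_star \<noteq> a_bar" and "a_bar \<noteq> a'" and "a_star \<noteq> a'"
    and "{(a_bar - a_star) / (a_bar - a'), (a' - a_bar) / (a' - a_star),
          (a_star - a') / (a_star - a_bar)}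
         \<inter> {\<kappa>. trace_FB (p ^ m) t \<kappa> = 0} \<noteq> {}"
  shows "has_centralized_repair
           (RS_code (card (UNIV :: 'a set) - card (UNIV :: 'a set) div (p ^ m)))
           (subfield_B p m) {a_star, a_bar, a'} 3
         \<and> repair_bandwidth ({a_star, a_bar, a'} :: 'a set) 3 = 3 * (card (UNIV :: 'a set) - 3)"
proof -
  have char: "CHAR('a) = p" by (rule CHAR_eq_prime_of_card[OF assms(1,4)])
  have q_eq: "p ^ m = CHAR('a) ^ m" and card_eq: "card (UNIV :: 'a set) = (p ^ m) ^ t"
    using assms(4) by (simp_all add: char power_mult)
  have t_eq_0: "of_nat t = (0 :: 'a)" using assms(5) by (simp add: char of_nat_eq_0_iff_char_dvd)
  have "trace_FB (p ^ m) t ((a_bar - a_star) / (a_bar - a')) = 0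
      \<or> trace_FB (p ^ m) t ((a' - a_bar) / (a' - a_star)) = 0
      \<or> trace_FB (p ^ m) t ((a_star - a') / (a_star - a_bar)) = 0"
    using assms(9) by blast
  then have "has_centralized_repair
      (RS_code (card (UNIV :: 'a set) - card (UNIV :: 'a set) div (p ^ m)))
      (subfield_B p m) {a_star, a_bar, a'} 3"
    unfolding subfield_B_def
    by (rule has_centralized_repair_RS_three_erasures[OF q_eq assms(2,3) card_eq t_eq_0 assms(6-8)])
  moreover have "card {a_star, a_bar, a'} = 3" using assms(6-8) by simp
  ultimately show ?thesis by (simp add: repair_bandwidth_def)
qed

end
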